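(* Let $T>0$, $f:[0,T]\times\mathbb{R}^d\to\mathbb{R}^d$, $\sigma:[0,T]\times\mathbb{R}^d\to\mathbb{R}$ smooth, and let $(p_\tau)_{0\le\tau\le T}$ be the (smooth, positive) densities of the forward process $\mathrm{d} Y_\tau = f_\tau(Y_\tau)\mathrm{d}\tau+\sqrt2\sigma_\tau(Y_\tau)\mathrm{d} B_\tau$, $Y_0\sim p_0$. Let $b:[0,T]\times\mathbb{R}^d\to\mathbb{R}$ be smooth with $b_\tau(y)\neq 0$, let $\hat s:[0,T]\times\mathbb{R}^d\to\mathbb{R}^d$ be smooth (an approximation of $\nabla\log p_\cdot$), and let $p_\infty$ be a smooth positive density. Let $(\hat p_\tau)_{0\le\tau\le T}$ be the densities of the process $$\mathrm{d}\hat Y_\tau = \hat f_\tau(\hat Y_\tau)\mathrm{d}\tau + \sqrt2\, b_\tau(\hat Y_\tau)\mathrm{d} B_\tau,\quad \hat Y_0\sim p_\infty,\qquad \hat f_\tau := -f_{T-\tau} + \nabla(\sigma_{T-\tau}^2+b_\tau^2) + (\sigma_{T-\tau}^2+b_\tau^2)\hat s_{T-\tau}.$$ Assume all these densities are regular enough for the Fokker–Planck equations, their transport reformulations and the KL time-derivative computation (interchange of derivative and integral, vanishing boundary terms) to hold. Then $$\mathrm{KL}(p_0\mid\hat p_T) \le \mathrm{KL}(p_T\mid p_\infty) + \int_0^T\int_{\mathbb{R}^d}\frac{\bigl(\sigma_{T-\tau}^2(y)+b_\tau^2(y)\bigr)^2}{4b_\tau^2(y)}\bigl\|\nabla\log p_{T-\tau}(y)-\hat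 s_{T-\tau}(y)\bigr\|^2 p_{T-\tau}(y)\,\mathrm{d} y\,\mathrm{d}\tau.$$
   Context: $B$ is a standard $d$-dimensional Brownian motion; $\mathrm{KL}(p\mid q)=\int p\log(p/q)$. *)

theory Defs
  imports "HOL-Analysis.Analysis"
begin

text \<open>Space R^d is an arbitrary Euclidean space 'a. Time-dependent fields are curried:
  u :: real => 'a => ...  (u t y = u_t(y)).\<close>

definition grad :: "('a::euclidean_space \<Rightarrow> real) \<Rightarrow> 'a \<Rightarrow> 'a" where
  "grad g x = (\<Sum>i\<in>Basis. frechet_derivative g (at x) i *\<^sub>R i)"

definition divg :: "('a::euclidean_space \<Rightarrow> 'a) \<Rightarrow> 'a \<Rightarrow> real" where
  "divg V x = (\<Sum>i\<in>Basis. frechet_derivative V (at x) i \<bullet> i)"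

definition lap :: "('a::euclidean_space \<Rightarrow> real) \<Rightarrow> 'a \<Rightarrow> real" where
  "lap g = divg (grad g)"

definition dt :: "(real \<Rightarrow> 'a \<Rightarrow> real) \<Rightarrow> real \<Rightarrow> 'a \<Rightarrow> real" where
  "dt u \<tau> x = deriv (\<lambda>t. u t x) \<tau>"

fun iter_pd :: "'a::euclidean_space list \<Rightarrow> ('a \<Rightarrow> 'b::real_normed_vector) \<Rightarrow> 'a \<Rightarrow> 'b" where
  "iter_pd [] g = g"
| "iter_pd (v # vs) g = (\<lambda>x. frechet_derivative (iter_pd vs g) (at x) v)"

definition smooth_on :: "'a::euclidean_space set \<Rightarrow> ('a \<Rightarrow> 'b::real_normed_vector) \<Rightarrow> bool" where
  "smooth_on U g \<longleftrightarrow> open U \<and>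
     (\<forall>vs. set vs \<subseteq> Basis \<longrightarrow> (\<forall>x\<in>U. iter_pd vs g differentiable (at x)))"

text \<open>Smooth on an arbitrary (e.g. closed) set: restriction of a function smooth on an open neighbourhood.\<close>
definition smooth_on_set :: "'a::euclidean_space set \<Rightarrow> ('a \<Rightarrow> 'b::real_normed_vector) \<Rightarrow> bool" where
  "smooth_on_set S g \<longleftrightarrow> (\<exists>U. S \<subseteq> U \<and> smooth_on U g)"

definition is_pos_density :: "('a::euclidean_space \<Rightarrow> real) \<Rightarrow> bool" where
  "is_pos_density p \<longleftrightarrow> (\<forall>y. p y > 0) \<and> integrable lborel p \<and> (\<integral>y. p y \<partial>lborel) = 1"

definition KL :: "('a::euclidean_space \<Rightarrow> real) \<Rightarrow> ('a \<Rightarrow> real) \<Rightarrow> real" where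
  "KL p q = (\<integral>y. p y * ln (p y / q y) \<partial>lborel)"

definition fhat :: "real \<Rightarrow> (real \<Rightarrow> 'a \<Rightarrow> 'a) \<Rightarrow> (real \<Rightarrow> 'a \<Rightarrow> real) \<Rightarrow> (real \<Rightarrow> 'a \<Rightarrow> real)
      \<Rightarrow> (real \<Rightarrow> 'a \<Rightarrow> 'a) \<Rightarrow> real \<Rightarrow> 'a \<Rightarrow> 'a::euclidean_space" where
  "fhat T f sig b shat \<tau> y =
     - f (T - \<tau>) y + grad (\<lambda>z. (sig (T - \<tau>) z)\<^sup>2 + (b \<tau> z)\<^sup>2) y
     + ((sig (T - \<tau>) y)\<^sup>2 + (b \<tau> y)\<^sup>2) *\<^sub>R shat (T - \<tau>) y"

text \<open>Probability fluxes of the transport (divergence) forms of the Fokker-Planck equations: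
  d/dtau p_{T-tau} = div (Jrev tau),  d/dtau phat_tau = div (Jhat tau).\<close>
definition Jrev :: "real \<Rightarrow> (real \<Rightarrow> 'a \<Rightarrow> real) \<Rightarrow> (real \<Rightarrow> 'a \<Rightarrow> 'a) \<Rightarrow> (real \<Rightarrow> 'a \<Rightarrow> real)
      \<Rightarrow> real \<Rightarrow> 'a \<Rightarrow> 'a::euclidean_space" where
  "Jrev T p f sig \<tau> y = p (T - \<tau>) y *\<^sub>R f (T - \<tau>) y - grad (\<lambda>z. (sig (T - \<tau>) z)\<^sup>2 * p (T - \<tau>) z) y"

definition Jhat :: "(real \<Rightarrow> 'a \<Rightarrow> real) \<Rightarrow> (real \<Rightarrow> 'a \<Rightarrow> 'a) \<Rightarrow> (real \<Rightarrow> 'a \<Rightarrow> real)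
      \<Rightarrow> real \<Rightarrow> 'a \<Rightarrow> 'a::euclidean_space" where
  "Jhat ph fh b \<tau> y = - (ph \<tau> y *\<^sub>R fh \<tau> y) + grad (\<lambda>z. (b \<tau> z)\<^sup>2 * ph \<tau> z) y"

end

theory Submission
  imports Defs
begin

text \<open>
  Write \<open>q = p (T - \<tau>)\<close> and \<open>h = ph \<tau>\<close>. By the Fokker-Planck equations both solve continuity
  equations \<open>\<partial>\<^sub>\<tau> q = div Jrev\<close>, \<open>\<partial>\<^sub>\<tau> h = div Jhat\<close>, so differentiating \<open>\<tau> \<mapsto> KL(q | h)\<close> under the
  integral and integrating by parts (the boundary terms vanish by hypothesis) turns its rate of
  change into the integral of \<open>q ((\<sigma>\<^sup>2 + b\<^sup>2) \<langle>a - c, a - s\<rangle> - b\<^sup>2 |a - c|\<^sup>2)\<close>, where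
  \<open>a = \<nabla> log q\<close>, \<open>c = \<nabla> log h\<close> and \<open>s\<close> is the approximate score; the drift \<open>f\<close> cancels.
  Young's inequality bounds this integrand by \<open>(\<sigma>\<^sup>2 + b\<^sup>2)\<^sup>2 / (4 b\<^sup>2) |a - s|\<^sup>2 q\<close>, and
  integrating the rate over \<open>[0, T]\<close> gives the theorem.
\<close>

section \<open>Gradient and divergence\<close>

lemma grad_eqI:
  fixes g :: "'a::euclidean_space \<Rightarrow> real"
  assumes "(g has_derivative g') (at x)" "\<And>v. g' v = w \<bullet> v"
  shows "grad g x = w"
proof -
  have "frechet_derivative g (at x) = (\<lambda>v. w \<bullet> v)"
    using frechet_derivative_at[OF assms(1)] assms(2) by auto
  then show ?thesis
    by (simp add: grad_def euclidean_representation)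
qed

lemma has_derivative_grad:
  fixes g :: "'a::euclidean_space \<Rightarrow> real"
  assumes "g differentiable (at x)"
  shows "(g has_derivative (\<lambda>v. grad g x \<bullet> v)) (at x)"
proof -
  let ?g' = "frechet_derivative g (at x)"
  have d: "(g has_derivative ?g') (at x)"
    using assms frechet_derivative_works by blast
  have "?g' v = grad g x \<bullet> v" for v
  proof -
    have "?g' v = (\<Sum>i\<in>Basis. (v \<bullet> i) * ?g' i)"
      using has_derivative_linear[OF d]
      by (subst euclidean_representation[symmetric, of v]) (simp add: linear_sum linear_scale)
    also have "\<dots> = grad g x \<bullet> v"
      by (simp add: grad_def inner_sum_right inner_commute mult.commute)
    finally show ?thesis .
  qed
  with d show ?thesis
    by (metis (no_types, lifting) ext)
qed

lemma grad_add:
  fixes g h :: "'a::euclidean_space \<Rightarrow> real"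
  assumes "g differentiable (at x)" "h differentiable (at x)"
  shows "grad (\<lambda>z. g z + h z) x = grad g x + grad h x"
  by (rule grad_eqI[OF has_derivative_add[OF has_derivative_grad[OF assms(1)] has_derivative_grad[OF assms(2)]]])
     (simp add: inner_add_left)

lemma grad_mult:
  fixes g h :: "'a::euclidean_space \<Rightarrow> real"
  assumes "g differentiable (at x)" "h differentiable (at x)"
  shows "grad (\<lambda>z. g z * h z) x = h x *\<^sub>R grad g x + g x *\<^sub>R grad h x"
  by (rule grad_eqI[OF has_derivative_mult[OF has_derivative_grad[OF assms(1)] has_derivative_grad[OF assms(2)]]])
     (simp add: inner_add_left algebra_simps)

lemma grad_ln:
  fixes g :: "'a::euclidean_space \<Rightarrow> real"
  assumes "g differentiable (at x)" "g x > 0"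
  shows "grad (\<lambda>z. ln (g z)) x = (1 / g x) *\<^sub>R grad g x"
  by (rule grad_eqI[OF has_derivative_ln[OF assms(2) has_derivative_grad[OF assms(1)]]])
     (simp add: field_simps)

lemma differentiable_ln:
  fixes g :: "'a::real_normed_vector \<Rightarrow> real"
  assumes "g differentiable (at x)" "g x > 0"
  shows "(\<lambda>z. ln (g z)) differentiable (at x)"
  using assms unfolding differentiable_def by (blast intro: has_derivative_ln)

lemma grad_mult_eq_ln:
  fixes g h :: "'a::euclidean_space \<Rightarrow> real"
  assumes "g differentiable (at x)" "h differentiable (at x)" "h x > 0"
  shows "grad (\<lambda>z. g z * h z) x = h x *\<^sub>R (grad g x + g x *\<^sub>R grad (\<lambda>z. ln (h z)) x)"
  using assms by (simp add: grad_mult grad_ln scaleR_add_right)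

lemma grad_divide_eq_ln:
  fixes g h :: "'a::euclidean_space \<Rightarrow> real"
  assumes "g differentiable (at x)" "h differentiable (at x)" "g x > 0" "h x > 0"
  shows "grad (\<lambda>z. g z / h z) x
    = (g x / h x) *\<^sub>R (grad (\<lambda>z. ln (g z)) x - grad (\<lambda>z. ln (h z)) x)"
proof (rule grad_eqI)
  show "((\<lambda>z. g z / h z) has_derivative
      (\<lambda>v. - g x * (inverse (h x) * (grad h x \<bullet> v) * inverse (h x)) + (grad g x \<bullet> v) / h x)) (at x)"
    using has_derivative_grad[OF assms(1)] has_derivative_grad[OF assms(2)] assms(4)
    by (intro has_derivative_divide) auto
  fix v
  show "- g x * (inverse (h x) * (grad h x \<bullet> v) * inverse (h x)) + (grad g x \<bullet> v) / h x
      = (g x / h x) *\<^sub>R (grad (\<lambda>z. ln (g z)) x - grad (\<lambda>z. ln (h z)) x) \<bullet> v"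
    using assms by (simp add: grad_ln inner_diff_left divide_simps)
qed

lemma grad_ln_divide:
  fixes g h :: "'a::euclidean_space \<Rightarrow> real"
  assumes "g differentiable (at x)" "h differentiable (at x)" "g x > 0" "h x > 0"
  shows "grad (\<lambda>z. ln (g z / h z)) x = grad (\<lambda>z. ln (g z)) x - grad (\<lambda>z. ln (h z)) x"
proof -
  have "(\<lambda>z. g z / h z) differentiable (at x)"
    using assms by (intro differentiable_divide) auto
  then have "grad (\<lambda>z. ln (g z / h z)) x = (h x / g x) *\<^sub>R grad (\<lambda>z. g z / h z) x"
    using assms by (simp add: grad_ln)
  also have "\<dots> = grad (\<lambda>z. ln (g z)) x - grad (\<lambda>z. ln (h z)) x"
    using assms by (simp add: grad_divide_eq_ln)
  finally show ?thesis .
qed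

lemma divg_eq:
  assumes "(V has_derivative V') (at x)"
  shows "divg V x = (\<Sum>i\<in>Basis. V' i \<bullet> i)"
  using frechet_derivative_at[OF assms] unfolding divg_def by simp

lemma divg_diff:
  fixes A B :: "'a::euclidean_space \<Rightarrow> 'a"
  assumes "A differentiable (at x)" "B differentiable (at x)"
  shows "divg (\<lambda>z. A z - B z) x = divg A x - divg B x"
proof -
  have "(A has_derivative frechet_derivative A (at x)) (at x)"
    and "(B has_derivative frechet_derivative B (at x)) (at x)"
    using assms by (simp_all add: frechet_derivative_works)
  from divg_eq[OF has_derivative_diff[OF this]] show ?thesis
    by (simp add: divg_def inner_diff_left sum_subtractf)
qed

lemma divg_minus_add:
  fixes A B :: "'a::euclidean_space \<Rightarrow> 'a"
  assumes "A differentiable (at x)" "B differentiable (at x)"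
  shows "divg (\<lambda>z. - A z + B z) x = - divg A x + divg B x"
proof -
  have "(A has_derivative frechet_derivative A (at x)) (at x)"
    and "(B has_derivative frechet_derivative B (at x)) (at x)"
    using assms by (simp_all add: frechet_derivative_works)
  from divg_eq[OF has_derivative_add[OF has_derivative_minus[OF this(1)] this(2)]] show ?thesis
    by (simp add: divg_def inner_diff_left sum_subtractf)
qed

lemma divg_scaleR:
  fixes V :: "'a::euclidean_space \<Rightarrow> 'a"
  assumes "\<phi> differentiable (at x)" "V differentiable (at x)"
  shows "divg (\<lambda>z. \<phi> z *\<^sub>R V z) x = \<phi> x * divg V x + grad \<phi> x \<bullet> V x"
proof -
  let ?V' = "frechet_derivative V (at x)"
  have "divg (\<lambda>z. \<phi> z *\<^sub>R V z) x = (\<Sum>i\<in>Basis. (\<phi> x *\<^sub>R ?V' i + (grad \<phi> x \<bullet> i) *\<^sub>R V x) \<bullet> i)"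
    using assms
    by (intro divg_eq has_derivative_scaleR has_derivative_grad) (auto simp: frechet_derivative_works)
  also have "\<dots> = \<phi> x * divg V x + grad \<phi> x \<bullet> V x"
    by (simp only: divg_def inner_add_left inner_scaleR_left sum.distrib sum_distrib_left
        euclidean_inner[of "grad \<phi> x" "V x"])
  finally show ?thesis .
qed

section \<open>Slices of smooth space-time functions\<close>

lemma smooth_on_set_differentiable:
  assumes "smooth_on_set S G" "x \<in> S"
  shows "G differentiable (at x)"
  using assms unfolding smooth_on_set_def smooth_on_def
  by (metis empty_subsetI iter_pd.simps(1) list.set(1) subsetD)

lemma smooth_on_set_partial_differentiable:
  assumes "smooth_on_set S G" "x \<in> S" "v \<in> Basis"
  shows "(\<lambda>y. frechet_derivative G (at y) v) differentiable (at x)"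
proof -
  obtain U where "S \<subseteq> U" "smooth_on U G"
    using assms(1) unfolding smooth_on_set_def by blast
  moreover have "set [v] \<subseteq> Basis"
    using assms(3) by simp
  ultimately have "iter_pd [v] G differentiable (at x)"
    using assms(2) unfolding smooth_on_def by blast
  then show ?thesis by simp
qed

lemma has_derivative_slice:
  assumes "G differentiable (at (t, z))"
  shows "((\<lambda>w. G (t, w)) has_derivative (\<lambda>h. frechet_derivative G (at (t, z)) (0, h))) (at z)"
proof -
  have "((\<lambda>w. (t, w)) has_derivative (\<lambda>h. (0, h))) (at z)"
    by (intro has_derivative_Pair has_derivative_const has_derivative_ident)
  from has_derivative_compose[OF this frechet_derivative_works[THEN iffD1, OF assms]]
  show ?thesis by (simp add: o_def)
qed

lemma differentiable_slice:
  assumes "smooth_on_set S (\<lambda>(t, y). u t y)" "{t} \<times> UNIV \<subseteq> S"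
  shows "u t differentiable (at z)"
  using has_derivative_slice[OF smooth_on_set_differentiable[OF assms(1)]] assms(2)
  unfolding differentiable_def by fastforce

definition twice_differentiable :: "('a::euclidean_space \<Rightarrow> real) \<Rightarrow> bool" where
  "twice_differentiable g \<longleftrightarrow> (\<forall>z. g differentiable (at z)) \<and>
     (\<forall>i\<in>Basis. \<forall>z. (\<lambda>w. frechet_derivative g (at w) i) differentiable (at z))"

lemma twice_differentiable_imp_differentiable:
  "twice_differentiable g \<Longrightarrow> g differentiable (at z)"
  unfolding twice_differentiable_def by blast

lemma twice_differentiable_has_derivative:
  "twice_differentiable g \<Longrightarrow> (g has_derivative frechet_derivative g (at z)) (at z)"
  using twice_differentiable_imp_differentiable frechet_derivative_works by blast

lemma twice_differentiable_slice:
  fixes u :: "real \<Rightarrow> 'a::euclidean_space \<Rightarrow> real"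
  assumes smooth: "smooth_on_set S (\<lambda>(t, y). u t y)" and S: "{t} \<times> UNIV \<subseteq> S"
  shows "twice_differentiable (u t)"
  unfolding twice_differentiable_def
proof (intro conjI ballI allI)
  fix z
  show "u t differentiable (at z)" by (rule differentiable_slice[OF assms])
next
  let ?G = "\<lambda>(t, y). u t y"
  fix i :: 'a and z
  assume i: "i \<in> Basis"
  have partial_eq: "frechet_derivative (u t) (at w) i = frechet_derivative ?G (at (t, w)) (0, i)" for w
  proof -
    have "(t, w) \<in> S"
      using S by auto
    from has_derivative_slice[OF smooth_on_set_differentiable[OF smooth this]]
    show ?thesis
      by (simp add: frechet_derivative_at[symmetric])
  qed
  have "(0, i) \<in> (Basis :: (real \<times> 'a) set)"
    using i by (simp add: Basis_prod_def)
  then have "(\<lambda>x. frechet_derivative ?G (at x) (0, i)) differentiable (at (t, z))"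
    using S by (intro smooth_on_set_partial_differentiable[OF smooth]) auto
  moreover have "(\<lambda>w. (t, w)) differentiable (at z)"
    by (intro differentiable_Pair differentiable_const differentiable_ident)
  ultimately show "(\<lambda>w. frechet_derivative (u t) (at w) i) differentiable (at z)"
    using differentiable_chain_at by (fastforce simp: partial_eq o_def)
qed

lemma twice_differentiable_add:
  assumes "twice_differentiable g" "twice_differentiable h"
  shows "twice_differentiable (\<lambda>z. g z + h z)"
  unfolding twice_differentiable_def
proof (intro conjI ballI allI)
  fix z
  show "(\<lambda>z. g z + h z) differentiable (at z)"
    using assms twice_differentiable_imp_differentiable by (intro differentiable_add) auto
next
  fix i :: 'a and z
  assume "i \<in> Basis"
  have "frechet_derivative (\<lambda>z. g z + h z) (at w) i
      = frechet_derivative g (at w) i + frechet_derivative h (at w) i" for w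
    using fun_cong[where x = i, OF frechet_derivative_at[OF has_derivative_add[OF
        twice_differentiable_has_derivative[OF assms(1)] twice_differentiable_has_derivative[OF assms(2)]]]]
    by simp
  with \<open>i \<in> Basis\<close> show "(\<lambda>w. frechet_derivative (\<lambda>z. g z + h z) (at w) i) differentiable (at z)"
    using assms unfolding twice_differentiable_def by (auto intro!: differentiable_add)
qed

lemma twice_differentiable_mult:
  assumes "twice_differentiable g" "twice_differentiable h"
  shows "twice_differentiable (\<lambda>z. g z * h z)"
  unfolding twice_differentiable_def
proof (intro conjI ballI allI)
  fix z
  show "(\<lambda>z. g z * h z) differentiable (at z)"
    using assms twice_differentiable_imp_differentiable by (intro differentiable_mult) auto
next
  fix i :: 'a and z
  assume "i \<in> Basis"
  have "frechet_derivative (\<lambda>z. g z * h z) (at w) i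
      = g w * frechet_derivative h (at w) i + frechet_derivative g (at w) i * h w" for w
    using fun_cong[where x = i, OF frechet_derivative_at[OF has_derivative_mult[OF
        twice_differentiable_has_derivative[OF assms(1)] twice_differentiable_has_derivative[OF assms(2)]]]]
    by simp
  with \<open>i \<in> Basis\<close> show "(\<lambda>w. frechet_derivative (\<lambda>z. g z * h z) (at w) i) differentiable (at z)"
    using assms twice_differentiable_imp_differentiable unfolding twice_differentiable_def
    by (auto intro!: differentiable_add differentiable_mult)
qed

lemma twice_differentiable_power2:
  "twice_differentiable g \<Longrightarrow> twice_differentiable (\<lambda>z. (g z)\<^sup>2)"
  using twice_differentiable_mult[of g g] by (simp add: power2_eq_square)

lemma differentiable_grad:
  assumes "twice_differentiable g"
  shows "grad g differentiable (at z)"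
proof -
  have "grad g = (\<lambda>x. \<Sum>i\<in>Basis. frechet_derivative g (at x) i *\<^sub>R i)"
    by (simp add: grad_def fun_eq_iff)
  with assms show ?thesis
    unfolding twice_differentiable_def by (auto intro!: differentiable_sum differentiable_scaleR)
qed

lemma has_real_derivative_dt:
  fixes u :: "real \<Rightarrow> 'a::euclidean_space \<Rightarrow> real"
  assumes "smooth_on_set S (\<lambda>(t, y). u t y)" "(t, y) \<in> S"
  shows "((\<lambda>s. u s y) has_real_derivative dt u t y) (at t)"
proof -
  have "((\<lambda>s. (s, y)) has_derivative (\<lambda>h. (h, 0))) (at t)"
    by (intro has_derivative_Pair has_derivative_const has_derivative_ident)
  with differentiable_chain_at[of "\<lambda>s. (s, y)" t "\<lambda>(t, y). u t y"] smooth_on_set_differentiable[OF assms]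
  have "(\<lambda>s. u s y) differentiable (at t)"
    by (auto simp: differentiable_def o_def)
  then show ?thesis
    by (simp add: dt_def DERIV_deriv_iff_real_differentiable)
qed

section \<open>The pointwise estimate\<close>

lemma inner_minus_norm_sq_le:
  fixes u v :: "'a::real_inner"
  assumes "B > 0"
  shows "K * (u \<bullet> v) - B * (norm u)\<^sup>2 \<le> K\<^sup>2 / (4 * B) * (norm v)\<^sup>2"
proof -
  have "0 \<le> (B *\<^sub>R u - (K / 2) *\<^sub>R v) \<bullet> (B *\<^sub>R u - (K / 2) *\<^sub>R v)"
    by simp
  also have "\<dots> = B * (K\<^sup>2 / (4 * B) * (norm v)\<^sup>2 - (K * (u \<bullet> v) - B * (norm u)\<^sup>2))"
    unfolding power2_norm_eq_inner using assms
    by (simp add: inner_diff_left inner_diff_right inner_commute power2_eq_square field_simps)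
  finally show ?thesis
    using assms by (simp add: zero_le_mult_iff)
qed

lemma flux_pairing_le:
  fixes a c s G :: "'a::real_inner" and q h S B :: real
  assumes q: "q > 0" and h: "h > 0" and B: "B > 0"
  shows "- ((a - c) \<bullet> (q *\<^sub>R (G - S *\<^sub>R a)))
      + ((q / h) *\<^sub>R (a - c)) \<bullet> (h *\<^sub>R (G - (S + B) *\<^sub>R s + B *\<^sub>R c))
    \<le> (S + B)\<^sup>2 / (4 * B) * (norm (a - s))\<^sup>2 * q"
proof -
  have "- ((a - c) \<bullet> (q *\<^sub>R (G - S *\<^sub>R a)))
      + ((q / h) *\<^sub>R (a - c)) \<bullet> (h *\<^sub>R (G - (S + B) *\<^sub>R s + B *\<^sub>R c))
    = q * ((a - c) \<bullet> ((S + B) *\<^sub>R (a - s) - B *\<^sub>R (a - c)))"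
    using h by (simp add: algebra_simps)
  also have "\<dots> = q * ((S + B) * ((a - c) \<bullet> (a - s)) - B * (norm (a - c))\<^sup>2)"
    by (simp add: inner_diff_right power2_norm_eq_inner)
  also have "\<dots> \<le> q * ((S + B)\<^sup>2 / (4 * B) * (norm (a - s))\<^sup>2)"
    using q inner_minus_norm_sq_le[OF B] by (intro mult_left_mono) auto
  finally show ?thesis
    by (simp add: mult.commute)
qed

lemma has_real_derivative_relative_entropy:
  fixes Q H :: "real \<Rightarrow> real"
  assumes "(Q has_real_derivative Q') (at t)" "(H has_real_derivative H') (at t)"
    and "Q t > 0" "H t > 0"
  shows "((\<lambda>s. Q s * ln (Q s / H s)) has_real_derivative
      Q' * ln (Q t / H t) + Q' - Q t / H t * H') (at t)"
  using assms by (auto intro!: derivative_eq_intros simp: field_simps power2_eq_square)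

section \<open>Integrating the rate\<close>

lemma has_integral_le_nn_integral:
  fixes D :: "real \<Rightarrow> real" and G :: "real \<Rightarrow> ennreal"
  assumes D: "(D has_integral V) {a..b}"
    and le: "\<And>s. s \<in> {a..b} \<Longrightarrow> ennreal (D s) \<le> G s"
  shows "ereal V \<le> enn2ereal (\<integral>\<^sup>+ s\<in>{a..b}. G s \<partial>lborel)"
proof -
  define P where "P s = (if s \<in> {a..b} then max (D s) 0 else 0)" for s
  have "(\<lambda>s. indicator {a..b} s *\<^sub>R D s) \<in> borel_measurable lebesgue"
    by (rule has_integral_implies_lebesgue_measurable[OF D])
  then have "(\<lambda>s. max (indicator {a..b} s *\<^sub>R D s) 0) \<in> borel_measurable lebesgue"
    by measurable
  also have "(\<lambda>s. max (indicator {a..b} s *\<^sub>R D s) 0) = P"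
    by (auto simp: P_def fun_eq_iff indicator_def)
  finally have P_meas: "P \<in> borel_measurable lebesgue" .
  have P_le: "(\<integral>\<^sup>+s. ennreal (P s) \<partial>lebesgue) \<le> (\<integral>\<^sup>+ s\<in>{a..b}. G s \<partial>lborel)"
    unfolding nn_integral_completion
    using le by (intro nn_integral_mono) (auto simp: P_def indicator_def max.commute[of _ 0] ennreal_max_0)
  show ?thesis
  proof (cases "(\<integral>\<^sup>+ s\<in>{a..b}. G s \<partial>lborel) = \<infinity>")
    case False
    have P_int: "integrable lebesgue P"
      using P_meas P_le False by (intro integrableI_nonneg) (auto simp: P_def top.not_eq_extremum)
    then have "(P has_integral integral\<^sup>L lebesgue P) UNIV"
      by (rule has_integral_integral_lebesgue)
    then have "((\<lambda>s. max (D s) 0) has_integral integral\<^sup>L lebesgue P) {a..b}"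
      unfolding P_def has_integral_restrict_UNIV .
    then have "V \<le> integral\<^sup>L lebesgue P"
      by (rule has_integral_le[OF D]) simp
    also have "ereal (integral\<^sup>L lebesgue P) = enn2ereal (\<integral>\<^sup>+s. ennreal (P s) \<partial>lebesgue)"
      using P_int by (subst nn_integral_eq_integral) (auto simp: P_def integral_nonneg_AE)
    also have "\<dots> \<le> enn2ereal (\<integral>\<^sup>+ s\<in>{a..b}. G s \<partial>lborel)"
      using P_le by (simp add: less_eq_ennreal.rep_eq)
    finally show ?thesis by simp
  qed simp
qed

lemma increment_le_nn_integral_derivative:
  fixes F F' :: "real \<Rightarrow> real" and G :: "real \<Rightarrow> ennreal"
  assumes "a \<le> b" "continuous_on {a..b} F"
    and F': "\<And>s. s \<in> {a<..<b} \<Longrightarrow> (F has_real_derivative F' s) (at s)"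
    and le: "\<And>s. s \<in> {a<..<b} \<Longrightarrow> ennreal (F' s) \<le> G s"
  shows "ereal (F b) \<le> ereal (F a) + enn2ereal (\<integral>\<^sup>+ s\<in>{a..b}. G s \<partial>lborel)"
proof -
  define D where "D s = (if s \<in> {a<..<b} then F' s else 0)" for s
  have "(D has_integral F b - F a) {a..b}"
    using assms(1,2) F'
    by (intro fundamental_theorem_of_calculus_interior)
       (auto simp: D_def has_real_derivative_iff_has_vector_derivative[symmetric])
  then have "ereal (F b - F a) \<le> enn2ereal (\<integral>\<^sup>+ s\<in>{a..b}. G s \<partial>lborel)"
    by (rule has_integral_le_nn_integral) (auto simp: D_def le)
  then show ?thesis
    by (cases "enn2ereal (\<integral>\<^sup>+ s\<in>{a..b}. G s \<partial>lborel)") (auto simp: algebra_simps)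
qed

lemma integral_le_nn_integral_modulo_null:
  fixes d n g :: "'a \<Rightarrow> real"
  assumes "integrable M d" "integrable M n" "(\<integral>x. n x \<partial>M) = 0"
    and "\<And>x. d x - n x \<le> g x"
  shows "ennreal (\<integral>x. d x \<partial>M) \<le> (\<integral>\<^sup>+x. ennreal (g x) \<partial>M)"
proof -
  have "(\<integral>x. d x \<partial>M) = (\<integral>x. d x - n x \<partial>M)"
    using assms(1-3) by simp
  also have "\<dots> \<le> (\<integral>x. max (d x - n x) 0 \<partial>M)"
    using assms(1,2) by (intro integral_mono) auto
  finally have "ennreal (\<integral>x. d x \<partial>M) \<le> ennreal (\<integral>x. max (d x - n x) 0 \<partial>M)"
    by (rule ennreal_leI)
  also have "\<dots> = (\<integral>\<^sup>+x. ennreal (max (d x - n x) 0) \<partial>M)"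
    using assms(1,2) by (intro nn_integral_eq_integral[symmetric]) auto
  also have "\<dots> \<le> (\<integral>\<^sup>+x. ennreal (g x) \<partial>M)"
    using assms(4) by (intro nn_integral_mono) (metis ennreal_leI ennreal_max_0 max.commute)
  finally show ?thesis .
qed

section \<open>The KL divergence along the reversed flow\<close>

locale reverse_diffusion =
  fixes T :: real
    and f :: "real \<Rightarrow> 'a::euclidean_space \<Rightarrow> 'a"
    and sig b :: "real \<Rightarrow> 'a \<Rightarrow> real"
    and shat :: "real \<Rightarrow> 'a \<Rightarrow> 'a"
    and p ph :: "real \<Rightarrow> 'a \<Rightarrow> real"
  assumes f_smooth: "smooth_on_set ({0..T} \<times> UNIV) (\<lambda>(t, y). f t y)"
    and sig_smooth: "smooth_on_set ({0..T} \<times> UNIV) (\<lambda>(t, y). sig t y)"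
    and b_smooth: "smooth_on_set ({0..T} \<times> UNIV) (\<lambda>(t, y). b t y)"
    and b_nz: "\<And>t y. t \<in> {0..T} \<Longrightarrow> b t y \<noteq> 0"
    and shat_smooth: "smooth_on_set ({0..T} \<times> UNIV) (\<lambda>(t, y). shat t y)"
    and p_smooth: "smooth_on_set ({0..T} \<times> UNIV) (\<lambda>(t, y). p t y)"
    and p_pos: "\<And>t y. t \<in> {0..T} \<Longrightarrow> p t y > 0"
    and p_FP: "\<And>t y. t \<in> {0<..<T} \<Longrightarrow>
        dt p t y = - divg (\<lambda>z. p t z *\<^sub>R f t z) y + lap (\<lambda>z. (sig t z)\<^sup>2 * p t z) y"
    and ph_smooth: "smooth_on_set ({0..T} \<times> UNIV) (\<lambda>(t, y). ph t y)"
    and ph_pos: "\<And>t y. t \<in> {0..T} \<Longrightarrow> ph t y > 0"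
    and ph_FP: "\<And>t y. t \<in> {0<..<T} \<Longrightarrow>
        dt ph t y = - divg (\<lambda>z. ph t z *\<^sub>R fhat T f sig b shat t z) y
                    + lap (\<lambda>z. (b t z)\<^sup>2 * ph t z) y"
begin

abbreviation "Jr \<equiv> Jrev T p f sig"
abbreviation "Jh \<equiv> Jhat ph (fhat T f sig b shat) b"

abbreviation weighted_score_error :: "real \<Rightarrow> 'a \<Rightarrow> real" where
  "weighted_score_error t y \<equiv> ((sig (T - t) y)\<^sup>2 + (b t y)\<^sup>2)\<^sup>2 / (4 * (b t y)\<^sup>2)
     * (norm (grad (\<lambda>z. ln (p (T - t) z)) y - shat (T - t) y))\<^sup>2 * p (T - t) y"

lemma Jr_eq:
  "Jr t = (\<lambda>z. p (T - t) z *\<^sub>R f (T - t) z - grad (\<lambda>z. (sig (T - t) z)\<^sup>2 * p (T - t) z) z)"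
  by (simp add: Jrev_def fun_eq_iff)

lemma Jh_eq:
  "Jh t = (\<lambda>z. - (ph t z *\<^sub>R fhat T f sig b shat t z) + grad (\<lambda>z. (b t z)\<^sup>2 * ph t z) z)"
  by (simp add: Jhat_def fun_eq_iff)

lemma slice_regularity:
  assumes "t \<in> {0..T}"
  shows "twice_differentiable (p t)" "twice_differentiable (ph t)"
    and "twice_differentiable (\<lambda>z. (sig t z)\<^sup>2)" "twice_differentiable (\<lambda>z. (b t z)\<^sup>2)"
    and "f t differentiable (at z)" "shat t differentiable (at z)"
proof -
  have S: "{t} \<times> UNIV \<subseteq> {0..T} \<times> UNIV"
    using assms by auto
  show "twice_differentiable (p t)" "twice_differentiable (ph t)"
    and "twice_differentiable (\<lambda>z. (sig t z)\<^sup>2)" "twice_differentiable (\<lambda>z. (b t z)\<^sup>2)"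
    using twice_differentiable_slice[OF _ S] p_smooth ph_smooth sig_smooth b_smooth
    by (blast intro: twice_differentiable_power2)+
  show "f t differentiable (at z)" "shat t differentiable (at z)"
    using differentiable_slice[OF _ S] f_smooth shat_smooth by blast+
qed

lemma differentiable_flux_terms:
  assumes "t \<in> {0..T}"
  shows "(\<lambda>z. p (T - t) z *\<^sub>R f (T - t) z) differentiable (at z)"
    and "grad (\<lambda>z. (sig (T - t) z)\<^sup>2 * p (T - t) z) differentiable (at z)"
    and "(\<lambda>z. ph t z *\<^sub>R fhat T f sig b shat t z) differentiable (at z)"
    and "grad (\<lambda>z. (b t z)\<^sup>2 * ph t z) differentiable (at z)"
proof -
  have "T - t \<in> {0..T}"
    using assms by auto
  note reg = slice_regularity[OF this] slice_regularity[OF assms]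
  have "fhat T f sig b shat t = (\<lambda>z. - f (T - t) z + grad (\<lambda>z. (sig (T - t) z)\<^sup>2 + (b t z)\<^sup>2) z
      + ((sig (T - t) z)\<^sup>2 + (b t z)\<^sup>2) *\<^sub>R shat (T - t) z)"
    by (simp add: fhat_def fun_eq_iff)
  then have "fhat T f sig b shat t differentiable (at z)"
    using reg
    by (simp only:) (intro differentiable_add differentiable_minus differentiable_scaleR differentiable_grad
        twice_differentiable_add twice_differentiable_imp_differentiable; simp)
  then show "(\<lambda>z. ph t z *\<^sub>R fhat T f sig b shat t z) differentiable (at z)"
    using reg by (intro differentiable_scaleR twice_differentiable_imp_differentiable) auto
  show "(\<lambda>z. p (T - t) z *\<^sub>R f (T - t) z) differentiable (at z)"
    using reg by (intro differentiable_scaleR twice_differentiable_imp_differentiable) auto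
  show "grad (\<lambda>z. (sig (T - t) z)\<^sup>2 * p (T - t) z) differentiable (at z)"
    "grad (\<lambda>z. (b t z)\<^sup>2 * ph t z) differentiable (at z)"
    using reg by (intro differentiable_grad twice_differentiable_mult; simp)+
qed

lemma differentiable_fluxes:
  assumes "t \<in> {0..T}"
  shows "Jr t differentiable (at z)" "Jh t differentiable (at z)"
  unfolding Jr_eq Jh_eq using differentiable_flux_terms[OF assms]
  by (intro differentiable_diff differentiable_add differentiable_minus; simp)+

lemma Jr_eq_score:
  assumes "t \<in> {0..T}"
  shows "Jr t y = p (T - t) y *\<^sub>R (f (T - t) y - grad (\<lambda>z. (sig (T - t) z)\<^sup>2) y
      - (sig (T - t) y)\<^sup>2 *\<^sub>R grad (\<lambda>z. ln (p (T - t) z)) y)"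
proof -
  have "T - t \<in> {0..T}"
    using assms by auto
  then have "grad (\<lambda>z. (sig (T - t) z)\<^sup>2 * p (T - t) z) y = p (T - t) y *\<^sub>R
      (grad (\<lambda>z. (sig (T - t) z)\<^sup>2) y + (sig (T - t) y)\<^sup>2 *\<^sub>R grad (\<lambda>z. ln (p (T - t) z)) y)"
    using slice_regularity p_pos by (intro grad_mult_eq_ln twice_differentiable_imp_differentiable) auto
  then show ?thesis
    by (simp add: Jrev_def algebra_simps)
qed

lemma Jh_eq_score:
  assumes "t \<in> {0..T}"
  shows "Jh t y = ph t y *\<^sub>R (f (T - t) y - grad (\<lambda>z. (sig (T - t) z)\<^sup>2) y
      - ((sig (T - t) y)\<^sup>2 + (b t y)\<^sup>2) *\<^sub>R shat (T - t) y + (b t y)\<^sup>2 *\<^sub>R grad (\<lambda>z. ln (ph t z)) y)"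
proof -
  have "T - t \<in> {0..T}"
    using assms by auto
  then have "grad (\<lambda>z. (sig (T - t) z)\<^sup>2 + (b t z)\<^sup>2) y
      = grad (\<lambda>z. (sig (T - t) z)\<^sup>2) y + grad (\<lambda>z. (b t z)\<^sup>2) y"
    using assms slice_regularity by (intro grad_add twice_differentiable_imp_differentiable) auto
  moreover have "grad (\<lambda>z. (b t z)\<^sup>2 * ph t z) y
      = ph t y *\<^sub>R (grad (\<lambda>z. (b t z)\<^sup>2) y + (b t y)\<^sup>2 *\<^sub>R grad (\<lambda>z. ln (ph t z)) y)"
    using assms slice_regularity ph_pos by (intro grad_mult_eq_ln twice_differentiable_imp_differentiable) auto
  ultimately show ?thesis
    by (simp add: Jhat_def fhat_def algebra_simps)
qed

lemma has_real_derivative_p_reversed: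
  assumes "t \<in> {0<..<T}"
  shows "((\<lambda>s. p (T - s) y) has_real_derivative divg (Jr t) y) (at t)"
proof -
  have t: "T - t \<in> {0<..<T}" "t \<in> {0..T}"
    using assms by auto
  have "((\<lambda>s. p s y) has_real_derivative dt p (T - t) y) (at (T - t))"
    using p_smooth t by (intro has_real_derivative_dt) auto
  moreover have "divg (Jr t) y = - dt p (T - t) y"
    unfolding Jr_eq p_FP[OF t(1)] lap_def
    using differentiable_flux_terms[OF t(2)] by (simp add: divg_diff)
  moreover have "((\<lambda>s. T - s) has_real_derivative -1) (at t)"
    by (auto intro!: derivative_eq_intros)
  ultimately show ?thesis
    using DERIV_chain2 by fastforce
qed

lemma has_real_derivative_ph:
  assumes "t \<in> {0<..<T}"
  shows "((\<lambda>s. ph s y) has_real_derivative divg (Jh t) y) (at t)"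
proof -
  have t: "t \<in> {0..T}"
    using assms by auto
  have "((\<lambda>s. ph s y) has_real_derivative dt ph t y) (at t)"
    using ph_smooth t by (intro has_real_derivative_dt) auto
  moreover have "divg (Jh t) y = dt ph t y"
    unfolding Jh_eq ph_FP[OF assms] lap_def
    by (rule divg_minus_add[OF differentiable_flux_terms(3,4)[OF t]])
  ultimately show ?thesis
    by simp
qed

lemma dt_p_reversed:
  assumes "t \<in> {0<..<T}"
  shows "dt (\<lambda>s y. p (T - s) y) t y = divg (Jr t) y"
  unfolding dt_def using has_real_derivative_p_reversed[OF assms] by (rule DERIV_imp_deriv)

text \<open>The three correction terms are divergences with vanishing integral, so this bounds the rate
  of change of the KL divergence pointwise.\<close>

lemma KL_integrand_dt_le:
  assumes "t \<in> {0<..<T}"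
  shows "dt (\<lambda>s y. p (T - s) y * ln (p (T - s) y / ph s y)) t y
      - divg (\<lambda>y. ln (p (T - t) y / ph t y) *\<^sub>R Jr t y) y
      - dt (\<lambda>s y. p (T - s) y) t y
      + divg (\<lambda>y. (p (T - t) y / ph t y) *\<^sub>R Jh t y) y
    \<le> weighted_score_error t y"
proof -
  let ?q = "p (T - t)" and ?h = "ph t"
  let ?a = "grad (\<lambda>z. ln (?q z)) y" and ?c = "grad (\<lambda>z. ln (?h z)) y"
  have t: "t \<in> {0..T}" "T - t \<in> {0..T}"
    using assms by auto
  have q: "?q differentiable (at y)" "?q y > 0" and h: "?h differentiable (at y)" "?h y > 0"
    using slice_regularity(1,2) t p_pos ph_pos by (auto intro: twice_differentiable_imp_differentiable)
  have dt_KL: "dt (\<lambda>s y. p (T - s) y * ln (p (T - s) y / ph s y)) t y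
      = divg (Jr t) y * ln (?q y / ?h y) + divg (Jr t) y - ?q y / ?h y * divg (Jh t) y"
    unfolding dt_def using q h
    by (intro DERIV_imp_deriv has_real_derivative_relative_entropy
        has_real_derivative_p_reversed[OF assms] has_real_derivative_ph[OF assms]) auto
  have div_Jr: "divg (\<lambda>y. ln (?q y / ?h y) *\<^sub>R Jr t y) y
      = ln (?q y / ?h y) * divg (Jr t) y + (?a - ?c) \<bullet> Jr t y"
    using q h differentiable_fluxes[OF t(1)]
    by (simp add: divg_scaleR differentiable_ln grad_ln_divide)
  have div_Jh: "divg (\<lambda>y. (?q y / ?h y) *\<^sub>R Jh t y) y
      = ?q y / ?h y * divg (Jh t) y + ((?q y / ?h y) *\<^sub>R (?a - ?c)) \<bullet> Jh t y"
    using q h differentiable_fluxes[OF t(1)]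
    by (simp add: divg_scaleR grad_divide_eq_ln)
  have "dt (\<lambda>s y. p (T - s) y * ln (p (T - s) y / ph s y)) t y
      - divg (\<lambda>y. ln (?q y / ?h y) *\<^sub>R Jr t y) y
      - dt (\<lambda>s y. p (T - s) y) t y
      + divg (\<lambda>y. (?q y / ?h y) *\<^sub>R Jh t y) y
    = - ((?a - ?c) \<bullet> Jr t y) + ((?q y / ?h y) *\<^sub>R (?a - ?c)) \<bullet> Jh t y"
    unfolding dt_KL div_Jr div_Jh dt_p_reversed[OF assms] by (simp add: algebra_simps)
  also have "\<dots> \<le> weighted_score_error t y"
    unfolding Jr_eq_score[OF t(1)] Jh_eq_score[OF t(1)]
    using q h b_nz[OF t(1)] by (intro flux_pairing_le) auto
  finally show ?thesis .
qed

lemma KL_rate_le: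
  assumes t: "t \<in> {0<..<T}"
    and "integrable lborel (dt (\<lambda>s y. p (T - s) y * ln (p (T - s) y / ph s y)) t)"
    and "integrable lborel (divg (Jr t))" "(\<integral>y. divg (Jr t) y \<partial>lborel) = 0"
    and "integrable lborel (divg (\<lambda>y. ln (p (T - t) y / ph t y) *\<^sub>R Jr t y))"
      "(\<integral>y. divg (\<lambda>y. ln (p (T - t) y / ph t y) *\<^sub>R Jr t y) y \<partial>lborel) = 0"
    and "integrable lborel (divg (\<lambda>y. (p (T - t) y / ph t y) *\<^sub>R Jh t y))"
      "(\<integral>y. divg (\<lambda>y. (p (T - t) y / ph t y) *\<^sub>R Jh t y) y \<partial>lborel) = 0"
  shows "ennreal (\<integral>y. dt (\<lambda>s y. p (T - s) y * ln (p (T - s) y / ph s y)) t y \<partial>lborel)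
    \<le> (\<integral>\<^sup>+ y. ennreal (weighted_score_error t y) \<partial>lborel)"
proof (rule integral_le_nn_integral_modulo_null)
  let ?null = "\<lambda>y. divg (\<lambda>y. ln (p (T - t) y / ph t y) *\<^sub>R Jr t y) y + divg (Jr t) y
    - divg (\<lambda>y. (p (T - t) y / ph t y) *\<^sub>R Jh t y) y"
  show "integrable lborel ?null" "(\<integral>y. ?null y \<partial>lborel) = 0"
    using assms(3-8) by auto
  show "dt (\<lambda>s y. p (T - s) y * ln (p (T - s) y / ph s y)) t y - ?null y \<le> weighted_score_error t y" for y
    using KL_integrand_dt_le[OF t, of y] dt_p_reversed[OF t, of y] by simp
qed (use assms(2) in simp)

end

theorem mainTheorem8:
  fixes T :: real
    and f :: "real \<Rightarrow> 'a::euclidean_space \<Rightarrow> 'a"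
    and sig :: "real \<Rightarrow> 'a \<Rightarrow> real"
    and b :: "real \<Rightarrow> 'a \<Rightarrow> real"
    and shat :: "real \<Rightarrow> 'a \<Rightarrow> 'a"
    and p ph :: "real \<Rightarrow> 'a \<Rightarrow> real"
    and pinf :: "'a \<Rightarrow> real"
  assumes T_pos: "T > 0"
    and f_smooth: "smooth_on_set ({0..T} \<times> UNIV) (\<lambda>(t, y). f t y)"
    and sig_smooth: "smooth_on_set ({0..T} \<times> UNIV) (\<lambda>(t, y). sig t y)"
    and b_smooth: "smooth_on_set ({0..T} \<times> UNIV) (\<lambda>(t, y). b t y)"
    and b_nz: "\<And>t y. t \<in> {0..T} \<Longrightarrow> b t y \<noteq> 0"
    and shat_smooth: "smooth_on_set ({0..T} \<times> UNIV) (\<lambda>(t, y). shat t y)"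
    and pinf_smooth: "smooth_on UNIV pinf"
    and pinf_dens: "is_pos_density pinf"
    \<comment> \<open>(p_tau): smooth positive densities solving the forward Fokker-Planck equation\<close>
    and p_smooth: "smooth_on_set ({0..T} \<times> UNIV) (\<lambda>(t, y). p t y)"
    and p_dens: "\<And>t. t \<in> {0..T} \<Longrightarrow> is_pos_density (p t)"
    and p_FP: "\<And>t y. t \<in> {0<..<T} \<Longrightarrow>
        dt p t y = - divg (\<lambda>z. p t z *\<^sub>R f t z) y + lap (\<lambda>z. (sig t z)\<^sup>2 * p t z) y"
    \<comment> \<open>(phat_tau): smooth positive densities of the approximate reverse process, phat_0 = pinf\<close>
    and ph_smooth: "smooth_on_set ({0..T} \<times> UNIV) (\<lambda>(t, y). ph t y)"
    and ph_dens: "\<And>t. t \<in> {0..T} \<Longrightarrow> is_pos_density (ph t)"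
    and ph_init: "ph 0 = pinf"
    and ph_FP: "\<And>t y. t \<in> {0<..<T} \<Longrightarrow>
        dt ph t y = - divg (\<lambda>z. ph t z *\<^sub>R fhat T f sig b shat t z) y
                    + lap (\<lambda>z. (b t z)\<^sup>2 * ph t z) y"
    \<comment> \<open>regularity: finiteness/continuity of the KL along the flow\<close>
    and reg_KL_int: "\<And>t. t \<in> {0..T} \<Longrightarrow>
        integrable lborel (\<lambda>y. p (T - t) y * ln (p (T - t) y / ph t y))"
    and reg_KL_cont: "continuous_on {0..T} (\<lambda>t. KL (p (T - t)) (ph t))"
    \<comment> \<open>regularity: interchange of time derivative and integral\<close>
    and reg_KL_deriv: "\<And>t. t \<in> {0<..<T} \<Longrightarrow>
        integrable lborel (dt (\<lambda>s y. p (T - s) y * ln (p (T - s) y / ph s y)) t) \<and>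
        ((\<lambda>s. KL (p (T - s)) (ph s)) has_real_derivative
           (\<integral>y. dt (\<lambda>s y. p (T - s) y * ln (p (T - s) y / ph s y)) t y \<partial>lborel)) (at t)"
    and reg_pieces: "\<And>t. t \<in> {0<..<T} \<Longrightarrow>
        integrable lborel (\<lambda>y. dt (\<lambda>s y. p (T - s) y) t y * ln (p (T - t) y / ph t y)) \<and>
        integrable lborel (\<lambda>y. dt (\<lambda>s y. p (T - s) y) t y) \<and>
        integrable lborel (\<lambda>y. p (T - t) y / ph t y * dt ph t y)"
    \<comment> \<open>regularity: vanishing boundary terms in the integrations by parts\<close>
    and reg_bdry1: "\<And>t. t \<in> {0<..<T} \<Longrightarrow>
        integrable lborel (divg (Jrev T p f sig t)) \<and>
        (\<integral>y. divg (Jrev T p f sig t) y \<partial>lborel) = 0"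
    and reg_bdry2: "\<And>t. t \<in> {0<..<T} \<Longrightarrow>
        integrable lborel (divg (\<lambda>y. ln (p (T - t) y / ph t y) *\<^sub>R Jrev T p f sig t y)) \<and>
        (\<integral>y. divg (\<lambda>y. ln (p (T - t) y / ph t y) *\<^sub>R Jrev T p f sig t y) y \<partial>lborel) = 0"
    and reg_bdry3: "\<And>t. t \<in> {0<..<T} \<Longrightarrow>
        integrable lborel (divg (\<lambda>y. (p (T - t) y / ph t y) *\<^sub>R Jhat ph (fhat T f sig b shat) b t y)) \<and>
        (\<integral>y. divg (\<lambda>y. (p (T - t) y / ph t y) *\<^sub>R Jhat ph (fhat T f sig b shat) b t y) y \<partial>lborel) = 0"
  shows "ereal (KL (p 0) (ph T)) \<le>
           ereal (KL (p T) pinf) +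
           enn2ereal (\<integral>\<^sup>+ t \<in> {0..T}. (\<integral>\<^sup>+ y.
              ennreal (((sig (T - t) y)\<^sup>2 + (b t y)\<^sup>2)\<^sup>2 / (4 * (b t y)\<^sup>2)
                * (norm (grad (\<lambda>z. ln (p (T - t) z)) y - shat (T - t) y))\<^sup>2
                * p (T - t) y) \<partial>lborel) \<partial>lborel)"
proof -
  have p_pos: "\<And>t y. t \<in> {0..T} \<Longrightarrow> p t y > 0"
    using p_dens by (simp add: is_pos_density_def)
  have ph_pos: "\<And>t y. t \<in> {0..T} \<Longrightarrow> ph t y > 0"
    using ph_dens by (simp add: is_pos_density_def)
  interpret reverse_diffusion T f sig b shat p ph
    using f_smooth sig_smooth b_smooth b_nz shat_smooth p_smooth p_pos p_FP ph_smooth ph_pos ph_FP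
    by unfold_locales
  have "ereal (KL (p (T - T)) (ph T)) \<le> ereal (KL (p (T - 0)) (ph 0)) +
      enn2ereal (\<integral>\<^sup>+ t \<in> {0..T}. (\<integral>\<^sup>+ y. ennreal (weighted_score_error t y) \<partial>lborel) \<partial>lborel)"
  proof (rule increment_le_nn_integral_derivative)
    fix t :: real
    assume t: "t \<in> {0<..<T}"
    then show "((\<lambda>s. KL (p (T - s)) (ph s)) has_real_derivative
        (\<integral>y. dt (\<lambda>s y. p (T - s) y * ln (p (T - s) y / ph s y)) t y \<partial>lborel)) (at t)"
      using reg_KL_deriv by blast
    show "ennreal (\<integral>y. dt (\<lambda>s y. p (T - s) y * ln (p (T - s) y / ph s y)) t y \<partial>lborel)
        \<le> (\<integral>\<^sup>+ y. ennreal (weighted_score_error t y) \<partial>lborel)"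
      using reg_KL_deriv[OF t] reg_bdry1[OF t] reg_bdry2[OF t] reg_bdry3[OF t]
      by (intro KL_rate_le[OF t]) auto
  qed (use T_pos reg_KL_cont in auto)
  then show ?thesis
    using ph_init by simp
qed

end
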